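(* Let $k\ge1$ and $f\in\mathrm{Homeo}_{\,Dehn\,k,nw}(\mathbb{A})$. If $f$ has bounded diffusion, i.e. $\sup_{n\in\mathbb{Z},z\in\mathbb{A}}|\mathrm{pr}_2(f^n(z)-z)|<\infty$, then $f$ has an invariant essential circloid.
   Context: $\mathbb{A}=\mathbb{R}^2/\sim$ where $(x,y)\sim(x',y')$ iff $x-x'\in\mathbb{Z}$ and $y=y'$; $\mathbb{T}^2=\mathbb{R}^2/\mathbb{Z}^2$; $\mathrm{pr}_2$ is the second coordinate, $\mathrm{pr}_2(g(z)-z):=\mathrm{pr}_2(g(z))-\mathrm{pr}_2(z)$. $\mathrm{Homeo}_{\,Dehn\,k,nw}(\mathbb{A})$: homeomorphisms of $\mathbb{A}$ lifting a non-wandering homeomorphism of $\mathbb{T}^2$ homotopic to the Dehn twist induced by $D_k(x,y)=(x+ky,y)$ (equivalently, orientation preserving with a lift $\tilde f$ to $\mathbb{R}^2$ satisfying $\tilde f(\tilde z+(1,0))=\tilde f(\tilde z)+(1,0)$, $\tilde f(\tilde z+(0,1))=\tilde f(\tilde z)+(k,1)$). An annular continuum in $\mathbb{A}$ is a compact connected set $\mathcal{C}$ whose complement consists of exactly two disjoint essential open topological annuli, each a neighborhood of one of the two ends of $\mathbb{A}$. A circloid is an annular continuum not properly containing another annular continuum. *)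

theory Defs
  imports "HOL-Analysis.Analysis"
begin

text \<open>Concrete model of the open annulus R^2/~ : the set S^1 x R, with S^1 the unit
circle in the complex plane; the quotient map from R^2 is (x,y) |-> (cis(2 pi x), y).
The second coordinate pr_2 is snd.\<close>

definition annulus :: "(complex \<times> real) set" where
  "annulus = sphere 0 1 \<times> UNIV"

definition pA :: "real \<times> real \<Rightarrow> complex \<times> real" where
  "pA z = (cis (2 * pi * fst z), snd z)"

text \<open>Lift F : R^2 -> R^2 of a torus map is non-wandering on T^2 = R^2/Z^2:
every nonempty open set of the torus meets one of its forward iterates.\<close>
definition torus_nonwandering :: "(real \<times> real \<Rightarrow> real \<times> real) \<Rightarrow> bool" where
  "torus_nonwandering F \<longleftrightarrow>
     (\<forall>U. open U \<and> U \<noteq> {} \<longrightarrow>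
        (\<exists>n::nat. n \<ge> 1 \<and> (\<exists>z\<in>U. \<exists>p q::int. (F ^^ n) z + (of_int p, of_int q) \<in> U)))"

text \<open>Homeo_{Dehn k, nw}(A): f is a homeomorphism of A (with inverse g) having a lift
F to R^2 with F(z+(1,0)) = F(z)+(1,0), F(z+(0,1)) = F(z)+(k,1), and the induced torus
homeomorphism is non-wandering.\<close>
definition homeo_dehn_nw ::
  "int \<Rightarrow> (complex \<times> real \<Rightarrow> complex \<times> real) \<Rightarrow> (complex \<times> real \<Rightarrow> complex \<times> real) \<Rightarrow> bool" where
  "homeo_dehn_nw k f g \<longleftrightarrow>
     homeomorphism annulus annulus f g \<and>
     (\<exists>F :: real \<times> real \<Rightarrow> real \<times> real.
        continuous_on UNIV F \<and>
        (\<forall>z. pA (F z) = f (pA z)) \<and>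
        (\<forall>x y. F (x + 1, y) = F (x, y) + (1, 0)) \<and>
        (\<forall>x y. F (x, y + 1) = F (x, y) + (of_int k, 1)) \<and>
        torus_nonwandering F)"

definition essential_in_annulus :: "(complex \<times> real) set \<Rightarrow> bool" where
  "essential_in_annulus U \<longleftrightarrow>
     (\<exists>p. path p \<and> pathfinish p = pathstart p \<and> path_image p \<subseteq> U \<and>
          \<not> homotopic_loops annulus p (linepath (pathstart p) (pathstart p)))"

definition open_ess_annulus :: "(complex \<times> real) set \<Rightarrow> bool" where
  "open_ess_annulus U \<longleftrightarrow>
     U \<subseteq> annulus \<and> openin (top_of_set annulus) U \<and> U homeomorphic annulus \<and>
     essential_in_annulus U"

definition nbhd_upper_end :: "(complex \<times> real) set \<Rightarrow> bool" where
  "nbhd_upper_end U \<longleftrightarrow> (\<exists>M. {z \<in> annulus. snd z > M} \<subseteq> U)"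

definition nbhd_lower_end :: "(complex \<times> real) set \<Rightarrow> bool" where
  "nbhd_lower_end U \<longleftrightarrow> (\<exists>M. {z \<in> annulus. snd z < M} \<subseteq> U)"

definition annular_continuum :: "(complex \<times> real) set \<Rightarrow> bool" where
  "annular_continuum C \<longleftrightarrow>
     C \<subseteq> annulus \<and> compact C \<and> connected C \<and> C \<noteq> {} \<and>
     (\<exists>U1 U2. annulus - C = U1 \<union> U2 \<and> U1 \<inter> U2 = {} \<and>
        open_ess_annulus U1 \<and> open_ess_annulus U2 \<and>
        nbhd_upper_end U1 \<and> nbhd_lower_end U2)"

definition circloid :: "(complex \<times> real) set \<Rightarrow> bool" where
  "circloid C \<longleftrightarrow> annular_continuum C \<and>
     (\<forall>C'. annular_continuum C' \<and> C' \<subseteq> C \<longrightarrow> C' = C)"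

text \<open>Bounded diffusion: sup over n in Z and z in A of |pr_2(f^n z) - pr_2 z| is finite
(negative iterates are iterates of the inverse g).\<close>
definition bounded_diffusion ::
  "(complex \<times> real \<Rightarrow> complex \<times> real) \<Rightarrow> (complex \<times> real \<Rightarrow> complex \<times> real) \<Rightarrow> bool" where
  "bounded_diffusion f g \<longleftrightarrow>
     (\<exists>B::real. \<forall>n::nat. \<forall>z\<in>annulus.
        \<bar>snd ((f ^^ n) z) - snd z\<bar> \<le> B \<and> \<bar>snd ((g ^^ n) z) - snd z\<bar> \<le> B)"

end

theory Submission
  imports Defs "HOL-Complex_Analysis.Riemann_Mapping"
begin

(*
  Via the chart (u, t) |-> u * e^t the annulus becomes the punctured plane, and f, extended by
  0 |-> 0, becomes a homeomorphism F of the plane.  Bounded diffusion says that every iterate F^n,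
  n in Z, changes |z| by at most a factor e^B.  Hence the union V of all iterates of the exterior
  of the unit disc is an open connected F-invariant set avoiding the disc of radius e^-B.  Let W be
  the component of C - closure V containing 0, and U the component of C - closure W containing the
  exterior of the unit disc.  Both are F-invariant, U and W - {0} are homeomorphic to C - {0}
  (Riemann mapping theorem, after an inversion for U), and the complement K of U and W is an
  invariant annular continuum.  It is a circloid: by connectedness the two complementary domains
  of an annular continuum inside K contain U and W - {0}, so they miss closure W and closure V,
  and therefore lie in U and W.
*)

lemma homeomorphism_funpow:
  assumes "homeomorphism S S f g"
  shows "homeomorphism S S (f ^^ n) (g ^^ n)"
proof (induction n)
  case 0
  then show ?case by (simp add: homeomorphism_ident id_def)
next
  case (Suc n)
  have "homeomorphism S S (f \<circ> f ^^ n) (g ^^ n \<circ> g)"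
    by (rule homeomorphism_compose[OF Suc assms])
  then show ?case
    by (simp add: funpow_Suc_right[symmetric] del: funpow.simps) (simp add: o_def)
qed

lemma homeomorphism_image_closure:
  assumes "homeomorphism UNIV UNIV f g"
  shows "f ` closure S = closure (f ` S)"
proof
  have cf: "continuous_on UNIV f" and cg: "continuous_on UNIV g" and gf: "\<And>x. g (f x) = x"
    using assms by (auto simp: homeomorphism_def)
  show "f ` closure S \<subseteq> closure (f ` S)"
    by (rule image_closure_subset[OF continuous_on_subset[OF cf]]) (auto intro: closure_subset[THEN subsetD])
  have "g ` closure (f ` S) \<subseteq> closure (g ` f ` S)"
    by (rule image_closure_subset[OF continuous_on_subset[OF cg]]) (auto intro: closure_subset[THEN subsetD])
  also have "g ` f ` S = S" using gf by (simp add: image_comp)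
  finally have "f ` g ` closure (f ` S) \<subseteq> f ` closure S" by blast
  then show "closure (f ` S) \<subseteq> f ` closure S"
    using assms by (simp add: image_comp homeomorphism_def)
qed

lemma homeomorphism_UNIV_image_Compl:
  assumes "homeomorphism UNIV UNIV f g"
  shows "f ` (- S) = - (f ` S)"
proof -
  have "bij f"
    using assms by (metis bij_betw_def homeomorphism_def inj_on_inverseI)
  then show ?thesis by (rule bij_image_Compl_eq)
qed

lemma homeomorphism_image_connected_component:
  assumes "homeomorphism UNIV UNIV f g"
  shows "f ` connected_component_set S x = connected_component_set (f ` S) (f x)"
proof (cases "x \<in> S")
  case True
  have "homeomorphism S (f ` S) f g"
    by (rule homeomorphism_of_subsets[OF assms]) auto
  then show ?thesis using connected_component_set_homeomorphism True by metis
next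
  case False
  then have "f x \<notin> f ` S"
    using assms by (metis homeomorphism_apply1 image_iff iso_tuple_UNIV_I)
  then show ?thesis using False by (simp add: connected_component_eq_empty[THEN iffD2])
qed

lemma connected_subset_open_Un:
  assumes "connected S" "open A" "open B" "A \<inter> B = {}" "S \<subseteq> A \<union> B" "S \<inter> A \<noteq> {}"
  shows "S \<subseteq> A"
  using connectedD[OF assms(1-3)] assms(4-6) by blast

lemma connected_subset_connected_component:
  assumes "connected P" "P \<subseteq> S" "z \<in> P" "z \<in> connected_component_set S x"
  shows "P \<subseteq> connected_component_set S x"
  using connected_component_maximal[OF assms(3,1,2)] connected_component_eq[OF assms(4)] by simp

section \<open>Domains in the plane homeomorphic to the punctured plane\<close>

lemma connected_closed_delete_interior:
  fixes X :: "complex set"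
  assumes "closed X" "connected X" "ball a r \<subseteq> X" "r > 0"
  shows "connected (X - {a})"
proof -
  have outer: "connected (X \<inter> - ball a (r/2))"
  proof (rule unicoherentD[OF unicoherent_UNIV])
    show "connected (- ball a (r/2))"
      by (rule connected_complement_bounded_convex) auto
    show "UNIV = X \<union> - ball a (r/2)"
      using assms(3,4) ball_subset_ball_iff[of a "r/2" a r] by auto
  qed (use assms in \<open>auto simp: closed_Compl\<close>)
  have inner: "connected (ball a r - {a})"
    by (rule connected_punctured_ball) simp
  have "a + of_real (3*r/4) \<in> (X \<inter> - ball a (r/2)) \<inter> (ball a r - {a})"
    using assms(3,4) by (auto simp: dist_norm)
  then have "connected ((X \<inter> - ball a (r/2)) \<union> (ball a r - {a}))"
    by (intro connected_Un outer inner) blast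
  also have "(X \<inter> - ball a (r/2)) \<union> (ball a r - {a}) = X - {a}"
    using assms(3,4) by (auto simp: dist_norm)
  finally show ?thesis .
qed

lemma punctured_simple_domain_homeomorphic:
  fixes S :: "complex set"
  assumes "open S" "bounded S" "connected S" "connected (- S)" "0 \<in> S"
  shows "S - {0} homeomorphic (- {0::complex})"
proof -
  have "simply_connected S"
    using simply_connected_iff_simple assms by blast
  then have "S homeomorphic (UNIV :: complex set)"
    using simply_connected_eq_homeomorphic_to_disc assms homeomorphic_ball_UNIV homeomorphic_trans
    by (metis empty_iff zero_less_one)
  then obtain h h' where h: "homeomorphism S (UNIV :: complex set) h h'"
    unfolding homeomorphic_def by blast
  define \<phi> where "\<phi> = (\<lambda>z. h z - h 0)"
  have "homeomorphism S UNIV ((+) (- h 0) \<circ> h) (h' \<circ> (+) (h 0))"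
    by (rule homeomorphism_compose[OF h]) (use homeomorphism_translation[of "h 0" UNIV] in simp)
  then have hom: "homeomorphism S UNIV \<phi> (h' \<circ> (+) (h 0))"
    by (simp add: \<phi>_def o_def)
  have "inj_on \<phi> S"
    using hom by (metis homeomorphism_apply1 inj_on_inverseI)
  then have "\<phi> ` (S - {0}) = \<phi> ` S - \<phi> ` {0}"
    by (rule inj_on_image_set_diff) (use \<open>0 \<in> S\<close> in auto)
  then have "\<phi> ` (S - {0}) = - {0}"
    using homeomorphism_image1[OF hom] by (simp add: \<phi>_def Compl_eq_Diff_UNIV)
  then have "homeomorphism (S - {0}) (- {0}) \<phi> (h' \<circ> (+) (h 0))"
    by (rule homeomorphism_of_subsets[OF hom, rotated 2]) auto
  then show ?thesis
    unfolding homeomorphic_def by blast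
qed

lemma bounded_inverse_image:
  fixes S :: "complex set"
  assumes "ball 0 r \<inter> S = {}" "r > 0"
  shows "bounded (inverse ` S)"
proof -
  have "norm (inverse w) \<le> inverse r" if "w \<in> S" for w
  proof -
    have "r \<le> norm w"
      using that assms(1) by (force simp: not_less[symmetric])
    then show ?thesis
      using assms(2) by (simp add: norm_inverse le_imp_inverse_le)
  qed
  then have "inverse ` S \<subseteq> cball 0 (inverse r)"
    by auto
  then show ?thesis
    by (rule bounded_subset[OF bounded_cball])
qed

lemma insert_zero_inverse_image:
  fixes S :: "complex set"
  assumes "- cball 0 R \<subseteq> S" "R > 0"
  shows "insert 0 (inverse ` S) = inverse ` S \<union> ball 0 (1/R)"
proof -
  have small: "z \<in> inverse ` S" if "z \<in> ball 0 (1/R)" "z \<noteq> 0" for z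
  proof -
    have "R < norm (inverse z)"
      using that assms(2) by (simp add: norm_inverse norm_divide field_simps)
    then have "inverse z \<in> S" using assms(1) by auto
    then show ?thesis by (metis image_eqI inverse_inverse_eq)
  qed
  show ?thesis
  proof
    show "insert 0 (inverse ` S) \<subseteq> inverse ` S \<union> ball 0 (1/R)"
      using assms(2) by auto
    show "inverse ` S \<union> ball 0 (1/R) \<subseteq> insert 0 (inverse ` S)"
      by (blast intro: small)
  qed
qed

lemma exterior_domain_homeomorphic:
  fixes S :: "complex set"
  assumes "open S" "connected S" "connected (- S)"
    and "- cball 0 R \<subseteq> S" "R > 0" and "ball 0 r \<inter> S = {}" "r > 0"
  shows "S homeomorphic (- {0::complex})"
proof -
  have S0: "0 \<notin> S" using assms(6,7) centre_in_ball by blast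
  have hom_inv: "homeomorphism (- {0}) (- {0 :: complex}) inverse inverse"
    by (rule homeomorphismI) (auto intro!: continuous_intros)
  define T where "T = insert 0 (inverse ` S)"
  have T_eq: "T = inverse ` S \<union> ball 0 (1/R)"
    unfolding T_def by (rule insert_zero_inverse_image[OF assms(4,5)])
  have "openin (top_of_set (- {0})) (inverse ` S)"
    by (rule homeomorphism_imp_open_map[OF hom_inv]) (use S0 assms(1) in \<open>auto intro: open_subset\<close>)
  then have open_T: "open T"
    unfolding T_eq using openin_open_trans open_delete[OF open_UNIV, of 0]
    by (metis Compl_eq_Diff_UNIV open_Un open_ball)
  have connected_T: "connected T"
    unfolding T_eq
  proof (rule connected_Un)
    show "connected (inverse ` S)"
      by (rule connected_continuous_image[OF _ assms(2)]) (use S0 in \<open>auto intro!: continuous_intros\<close>)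
    have "complex_of_real (1/(2*R)) \<in> ball 0 (1/R)" "complex_of_real (1/(2*R)) \<noteq> 0"
      using assms(5) by (simp_all add: dist_norm norm_divide norm_mult divide_strict_left_mono)
    then have "complex_of_real (1/(2*R)) \<in> inverse ` S \<inter> ball 0 (1/R)"
      using T_eq unfolding T_def by blast
    then show "inverse ` S \<inter> ball 0 (1/R) \<noteq> {}" by blast
  qed auto
  have bounded_T: "bounded T"
    unfolding T_def using bounded_inverse_image[OF assms(6,7)] by simp
  have "bij (inverse :: complex \<Rightarrow> complex)"
    by (rule involuntory_imp_bij) simp
  then have "- T = inverse ` (- S - {0})"
    using bij_image_Compl_eq[of inverse "insert 0 S"] by (simp add: T_def Compl_insert)
  moreover have "connected (- S - {0})"
    by (rule connected_closed_delete_interior[where r=r]) (use assms in \<open>auto simp: closed_Compl\<close>)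
  moreover have "continuous_on (- S - {0}) (inverse :: complex \<Rightarrow> complex)"
    by (auto intro!: continuous_intros)
  ultimately have connected_Compl_T: "connected (- T)"
    using connected_continuous_image by metis
  have "T - {0} homeomorphic (- {0::complex})"
    by (rule punctured_simple_domain_homeomorphic[OF open_T bounded_T connected_T connected_Compl_T])
      (simp add: T_def)
  moreover have "T - {0} = inverse ` S"
    using S0 by (auto simp: T_def)
  moreover have "S homeomorphic inverse ` S"
    unfolding homeomorphic_def
    by (rule exI, rule exI, rule homeomorphism_of_subsets[OF hom_inv]) (use S0 in auto)
  ultimately show ?thesis
    using homeomorphic_trans by metis
qed

section \<open>Orbits of a set\<close>

text \<open>For \<open>g = inv f\<close> this is the union of all \<open>f\<^sup>n ` U\<close>, \<open>n \<in> \<int>\<close>.\<close>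

definition full_orbit :: "('a \<Rightarrow> 'a) \<Rightarrow> ('a \<Rightarrow> 'a) \<Rightarrow> 'a set \<Rightarrow> 'a set" where
  "full_orbit f g U = (\<Union>n. (f ^^ n) ` U \<union> (g ^^ n) ` U)"

lemma full_orbit_image_subset:
  assumes "\<And>x. f (g x) = x"
  shows "f ` full_orbit f g U \<subseteq> full_orbit f g U"
proof
  fix y assume "y \<in> f ` full_orbit f g U"
  then obtain n x where x: "x \<in> U" and y: "y = f ((f ^^ n) x) \<or> y = f ((g ^^ n) x)"
    unfolding full_orbit_def by blast
  have "\<exists>m. y = (f ^^ m) x \<or> y = (g ^^ m) x"
  proof (cases n)
    case 0
    then show ?thesis using y by (intro exI[of _ 1]) auto
  next
    case (Suc m)
    then have "y = (f ^^ Suc n) x \<or> y = (g ^^ m) x"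
      using y assms by auto
    then show ?thesis by blast
  qed
  then show "y \<in> full_orbit f g U"
    using x unfolding full_orbit_def by blast
qed

lemma full_orbit_image:
  assumes "\<And>x. f (g x) = x" "\<And>x. g (f x) = x"
  shows "f ` full_orbit f g U = full_orbit f g U"
proof
  show "f ` full_orbit f g U \<subseteq> full_orbit f g U"
    using full_orbit_image_subset assms(1) .
  have "g ` full_orbit f g U \<subseteq> full_orbit f g U"
    using full_orbit_image_subset[of g f U] assms(2) by (simp add: full_orbit_def Un_commute)
  then have "f ` g ` full_orbit f g U \<subseteq> f ` full_orbit f g U"
    by blast
  then show "full_orbit f g U \<subseteq> f ` full_orbit f g U"
    using assms(1) by (simp add: image_comp)
qed

lemma open_full_orbit:
  assumes "homeomorphism UNIV UNIV f g" "open U"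
  shows "open (full_orbit f g U)"
proof -
  have "open (h ` U)" if "homeomorphism UNIV UNIV h h'" for h h'
    using homeomorphism_imp_open_map[OF that, of U] assms(2) by simp
  then show ?thesis
    unfolding full_orbit_def
    using homeomorphism_funpow[OF assms(1)] homeomorphism_funpow[OF homeomorphism_symD[OF assms(1)]]
    by blast
qed

lemma connected_full_orbit:
  assumes "homeomorphism UNIV UNIV f g" "connected U"
    and "\<And>n. (f ^^ n) p \<in> U" "\<And>n. (g ^^ n) p \<in> U"
  shows "connected (full_orbit f g U)"
proof -
  have piece: "connected ((f ^^ n) ` U \<union> (g ^^ n) ` U)" "p \<in> (f ^^ n) ` U \<union> (g ^^ n) ` U" for n
  proof -
    have hom: "homeomorphism UNIV UNIV (f ^^ n) (g ^^ n)"
      by (rule homeomorphism_funpow[OF assms(1)])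
    then have "p \<in> (f ^^ n) ` U" "p \<in> (g ^^ n) ` U"
      using assms(3,4) by (metis homeomorphism_apply1 homeomorphism_apply2 image_eqI iso_tuple_UNIV_I)+
    moreover have "connected ((f ^^ n) ` U)" "connected ((g ^^ n) ` U)"
      using hom by (auto intro!: connected_continuous_image[OF _ assms(2)]
          intro: continuous_on_subset simp: homeomorphism_def)
    ultimately show "connected ((f ^^ n) ` U \<union> (g ^^ n) ` U)" "p \<in> (f ^^ n) ` U \<union> (g ^^ n) ` U"
      by (auto intro!: connected_Un)
  qed
  show ?thesis
    unfolding full_orbit_def by (rule connected_Union) (use piece in blast)+
qed

section \<open>Annular continua in the punctured plane\<close>

text \<open>The images of annular continua under the chart \<open>polar\<close> below.  Essentiality of the
  complementary annuli need not be required: they contain circles around \<open>0\<close>.\<close>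

definition planar_annular_continuum :: "complex set \<Rightarrow> bool" where
  "planar_annular_continuum Q \<longleftrightarrow>
     0 \<notin> Q \<and> compact Q \<and> connected Q \<and> Q \<noteq> {} \<and>
     (\<exists>P1 P2. - {0} - Q = P1 \<union> P2 \<and> P1 \<inter> P2 = {} \<and> open P1 \<and> open P2 \<and>
        P1 homeomorphic (- {0::complex}) \<and> P2 homeomorphic (- {0::complex}) \<and>
        (\<exists>R. - cball 0 R \<subseteq> P1) \<and> (\<exists>r>0. ball 0 r - {0} \<subseteq> P2))"

definition planar_circloid :: "complex set \<Rightarrow> bool" where
  "planar_circloid Q \<longleftrightarrow> planar_annular_continuum Q \<and>
     (\<forall>Q'. planar_annular_continuum Q' \<and> Q' \<subseteq> Q \<longrightarrow> Q' = Q)"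

definition inner_domain :: "complex set \<Rightarrow> complex set" where
  "inner_domain V = connected_component_set (- closure V) 0"

definition outer_domain :: "complex set \<Rightarrow> complex set" where
  "outer_domain V = connected_component_set (- closure (inner_domain V)) 2"

definition annular_fill :: "complex set \<Rightarrow> complex set" where
  "annular_fill V = - (outer_domain V \<union> inner_domain V)"

lemma open_inner_domain: "open (inner_domain V)"
  by (simp add: inner_domain_def open_connected_component open_Compl)

lemma connected_inner_domain: "connected (inner_domain V)"
  by (simp add: inner_domain_def)

lemma inner_domain_inter_closure: "inner_domain V \<inter> closure V = {}"
  using connected_component_subset by (fastforce simp: inner_domain_def)

lemma open_outer_domain: "open (outer_domain V)"
  by (simp add: outer_domain_def open_connected_component open_Compl)

lemma connected_outer_domain: "connected (outer_domain V)"
  by (simp add: outer_domain_def)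

lemma outer_domain_subset: "outer_domain V \<subseteq> - closure (inner_domain V)"
  by (simp add: outer_domain_def connected_component_subset)

lemma outer_inter_inner_domain: "outer_domain V \<inter> inner_domain V = {}"
  using outer_domain_subset closure_subset by blast

lemma image_inner_domain:
  assumes "homeomorphism UNIV UNIV f g" "f 0 = 0" "f ` V = V"
  shows "f ` inner_domain V = inner_domain V"
  using assms homeomorphism_image_connected_component[OF assms(1)]
  by (simp add: inner_domain_def homeomorphism_UNIV_image_Compl homeomorphism_image_closure)

locale planar_fill =
  fixes V :: "complex set" and b :: real
  assumes open_V: "open V" and connected_V: "connected V"
    and exterior_subset_V: "- cball 0 1 \<subseteq> V"
    and V_inter_ball: "V \<inter> ball 0 b = {}" and b_pos: "b > 0"
begin

lemma ball_subset_inner_domain: "ball 0 b \<subseteq> inner_domain V"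
  unfolding inner_domain_def
proof (rule connected_component_maximal)
  show "ball 0 b \<subseteq> - closure V"
    using open_Int_closure_eq_empty[of "ball 0 b" V] V_inter_ball by auto
qed (use b_pos in auto)

lemma zero_in_inner_domain: "0 \<in> inner_domain V"
  using ball_subset_inner_domain b_pos by auto

lemma inner_domain_subset_cball: "inner_domain V \<subseteq> cball 0 1"
  using inner_domain_inter_closure exterior_subset_V closure_subset by blast

lemma connected_Compl_inner_domain: "connected (- inner_domain V)"
proof (rule component_complement_connected)
  show "connected (closure V)"
    by (rule connected_imp_connected_closure[OF connected_V])
  show "inner_domain V \<in> components (- closure V)"
    using zero_in_inner_domain unfolding inner_domain_def
    by (intro componentsI) (simp add: connected_component_in)
qed

lemma closure_inner_domain_subset_cball: "closure (inner_domain V) \<subseteq> cball 0 1"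
  by (rule closure_minimal[OF inner_domain_subset_cball]) simp

lemma exterior_subset_outer_domain: "- cball 0 1 \<subseteq> outer_domain V"
proof -
  have "- cball 0 1 \<subseteq> connected_component_set (- closure (inner_domain V)) 2"
    by (rule connected_component_maximal)
      (use closure_inner_domain_subset_cball in \<open>auto intro: connected_complement_bounded_convex\<close>)
  then show ?thesis by (simp add: outer_domain_def)
qed

lemma V_subset_outer_domain: "V \<subseteq> outer_domain V"
  unfolding outer_domain_def
proof (rule connected_subset_connected_component[OF connected_V])
  have "V \<inter> inner_domain V = {}"
    using inner_domain_inter_closure closure_subset by blast
  then show "V \<subseteq> - closure (inner_domain V)"
    using open_Int_closure_eq_empty[OF open_V] by blast
  show "2 \<in> V" "2 \<in> connected_component_set (- closure (inner_domain V)) 2"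
    using exterior_subset_V[THEN subsetD, of 2] exterior_subset_outer_domain[THEN subsetD, of 2]
    by (auto simp: outer_domain_def)
qed

lemma connected_Compl_outer_domain: "connected (- outer_domain V)"
proof (rule component_complement_connected)
  show "connected (closure (inner_domain V))"
    by (rule connected_imp_connected_closure[OF connected_inner_domain])
  show "outer_domain V \<in> components (- closure (inner_domain V))"
    using closure_inner_domain_subset_cball unfolding outer_domain_def
    by (intro componentsI) force
qed

lemma outer_domain_homeomorphic: "outer_domain V homeomorphic (- {0::complex})"
  by (rule exterior_domain_homeomorphic[where R=1 and r=b])
    (use open_outer_domain[of V] connected_outer_domain[of V] connected_Compl_outer_domain
      exterior_subset_outer_domain ball_subset_inner_domain outer_inter_inner_domain[of V] b_pos
      in auto)

lemma inner_domain_homeomorphic: "inner_domain V - {0} homeomorphic (- {0::complex})"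
  by (rule punctured_simple_domain_homeomorphic)
    (use open_inner_domain connected_inner_domain connected_Compl_inner_domain
      inner_domain_subset_cball zero_in_inner_domain in \<open>auto intro: bounded_subset\<close>)

lemma planar_annular_continuum_fill: "planar_annular_continuum (annular_fill V)"
  unfolding planar_annular_continuum_def
proof (intro conjI exI)
  show "0 \<notin> annular_fill V"
    using zero_in_inner_domain by (simp add: annular_fill_def)
  have "closed (annular_fill V)"
    unfolding annular_fill_def using open_outer_domain open_inner_domain by (intro closed_Compl open_Un)
  moreover have "annular_fill V \<subseteq> cball 0 1"
    using exterior_subset_outer_domain by (auto simp: annular_fill_def)
  ultimately show "compact (annular_fill V)"
    by (meson bounded_cball bounded_subset compact_eq_bounded_closed)
  show "connected (annular_fill V)"
    unfolding annular_fill_def Compl_Un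
  proof (rule unicoherentD[OF unicoherent_UNIV])
    show "UNIV = - outer_domain V \<union> - inner_domain V"
      using outer_inter_inner_domain by blast
  qed (use connected_Compl_outer_domain connected_Compl_inner_domain open_outer_domain open_inner_domain
      in \<open>auto simp: closed_Compl\<close>)
  show "annular_fill V \<noteq> {}"
  proof
    assume "annular_fill V = {}"
    then have "UNIV \<subseteq> outer_domain V \<union> inner_domain V"
      unfolding annular_fill_def by blast
    moreover have "UNIV \<inter> outer_domain V \<noteq> {}"
      using exterior_subset_outer_domain[THEN subsetD, of 2] by auto
    ultimately have "UNIV \<subseteq> outer_domain V"
      by (rule connected_subset_open_Un[OF connected_UNIV open_outer_domain open_inner_domain
          outer_inter_inner_domain])
    then show False
      using outer_inter_inner_domain zero_in_inner_domain by blast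
  qed
  show "- {0} - annular_fill V = outer_domain V \<union> (inner_domain V - {0})"
    using outer_inter_inner_domain zero_in_inner_domain by (auto simp: annular_fill_def)
  show "outer_domain V \<inter> (inner_domain V - {0}) = {}"
    using outer_inter_inner_domain by blast
  show "open (outer_domain V)" "open (inner_domain V - {0})"
    using open_outer_domain open_inner_domain by auto
  show "outer_domain V homeomorphic (- {0::complex})" "inner_domain V - {0} homeomorphic (- {0::complex})"
    by (fact outer_domain_homeomorphic, fact inner_domain_homeomorphic)
  show "- cball 0 1 \<subseteq> outer_domain V" "b > 0" "ball 0 b - {0} \<subseteq> inner_domain V - {0}"
    using exterior_subset_outer_domain b_pos ball_subset_inner_domain by auto
qed

lemma fill_domains_subset:
  assumes Q: "Q \<subseteq> annular_fill V"
    and P: "- {0} - Q = P1 \<union> P2" "P1 \<inter> P2 = {}" "open P1" "open P2"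
    and R: "- cball 0 R \<subseteq> P1" and r: "r > 0" "ball 0 r - {0} \<subseteq> P2"
  shows "outer_domain V \<subseteq> P1" "inner_domain V - {0} \<subseteq> P2"
proof -
  have domains_subset: "outer_domain V \<union> (inner_domain V - {0}) \<subseteq> P1 \<union> P2"
    using P(1) Q outer_inter_inner_domain zero_in_inner_domain by (auto simp: annular_fill_def)
  define z where "z = complex_of_real (\<bar>R\<bar> + 2)"
  have "norm z = \<bar>R\<bar> + 2"
    unfolding z_def norm_of_real by simp
  then have "z \<in> outer_domain V \<inter> P1"
    using exterior_subset_outer_domain R by auto
  then show "outer_domain V \<subseteq> P1"
    using connected_subset_open_Un[OF connected_outer_domain P(3,4,2)] domains_subset by blast
  define w where "w = complex_of_real (min r b / 2)"
  have "norm w = min r b / 2" "w \<noteq> 0"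
    unfolding w_def norm_of_real using r b_pos by auto
  then have "w \<in> ball 0 b" "w \<in> ball 0 r - {0}"
    using r b_pos by auto
  then have "w \<in> (inner_domain V - {0}) \<inter> P2"
    using ball_subset_inner_domain r by auto
  moreover have "connected (inner_domain V - {0})"
    using connected_open_delete[OF open_inner_domain connected_inner_domain] by simp
  ultimately show "inner_domain V - {0} \<subseteq> P2"
    using connected_subset_open_Un[OF _ P(4,3)] domains_subset P(2) by blast
qed

lemma planar_circloid_fill: "planar_circloid (annular_fill V)"
  unfolding planar_circloid_def
proof (intro conjI allI impI planar_annular_continuum_fill)
  fix Q assume "planar_annular_continuum Q \<and> Q \<subseteq> annular_fill V"
  then obtain P1 P2 R r where Q: "Q \<subseteq> annular_fill V"
    and P: "- {0} - Q = P1 \<union> P2" "P1 \<inter> P2 = {}" "open P1" "open P2"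
      "P1 homeomorphic (- {0::complex})" "P2 homeomorphic (- {0::complex})"
    and R: "- cball 0 R \<subseteq> P1" and r: "r > 0" "ball 0 r - {0} \<subseteq> P2"
    unfolding planar_annular_continuum_def by blast
  have "connected (- {0::complex})"
    by (simp add: connected_punctured_universe)
  then have connected_P: "connected P1" "connected P2"
    using P(5,6) homeomorphic_connectedness by blast+
  note fill_domains = fill_domains_subset[OF Q P(1-4) R r]
  have "P1 \<subseteq> outer_domain V"
    unfolding outer_domain_def
  proof (rule connected_subset_connected_component[OF connected_P(1)])
    have "P1 \<inter> inner_domain V = {}"
      using fill_domains(2) P(1,2) by blast
    then show "P1 \<subseteq> - closure (inner_domain V)"
      using open_Int_closure_eq_empty[OF P(3)] by blast
    show "2 \<in> P1" "2 \<in> connected_component_set (- closure (inner_domain V)) 2"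
      using fill_domains(1) exterior_subset_outer_domain[THEN subsetD, of 2]
      by (auto simp: outer_domain_def)
  qed
  moreover have "P2 \<subseteq> inner_domain V"
    unfolding inner_domain_def
  proof (rule connected_subset_connected_component[OF connected_P(2)])
    have "P2 \<inter> V = {}"
      using fill_domains(1) V_subset_outer_domain P(2) by blast
    then show "P2 \<subseteq> - closure V"
      using open_Int_closure_eq_empty[OF P(4)] by blast
    have "of_real (b/2) \<in> inner_domain V - {0}"
      using ball_subset_inner_domain b_pos by auto
    then show "of_real (b/2) \<in> P2" "of_real (b/2) \<in> connected_component_set (- closure V) 0"
      using fill_domains(2) by (auto simp: inner_domain_def)
  qed
  ultimately have "annular_fill V \<subseteq> Q"
    using P(1) zero_in_inner_domain by (auto simp: annular_fill_def)
  then show "Q = annular_fill V"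
    using Q by blast
qed

lemma image_annular_fill:
  assumes "homeomorphism UNIV UNIV f g" "f 0 = 0" "f ` V = V"
  shows "f ` annular_fill V = annular_fill V"
proof -
  have inner: "f ` inner_domain V = inner_domain V"
    by (rule image_inner_domain[OF assms])
  have "f 2 \<in> outer_domain V"
    using assms(3) exterior_subset_V V_subset_outer_domain by force
  then have "f ` outer_domain V = outer_domain V"
    using homeomorphism_image_connected_component[OF assms(1)] connected_component_eq
    by (simp add: outer_domain_def inner homeomorphism_UNIV_image_Compl[OF assms(1)]
        homeomorphism_image_closure[OF assms(1)])
  then show ?thesis
    using inner by (simp only: annular_fill_def homeomorphism_UNIV_image_Compl[OF assms(1)] image_Un)
qed

end

lemma planar_invariant_circloid:
  fixes f g :: "complex \<Rightarrow> complex"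
  assumes hom: "homeomorphism UNIV UNIV f g" and f0: "f 0 = 0" and "c > 0"
    and bound_f: "\<And>n z. c * norm z \<le> norm ((f ^^ n) z)"
    and bound_g: "\<And>n z. c * norm z \<le> norm ((g ^^ n) z)"
  obtains Q where "planar_circloid Q" "f ` Q = Q"
proof -
  define V where "V = full_orbit f g (- cball 0 1)"
  interpret planar_fill V c
  proof
    show "open V"
      unfolding V_def by (rule open_full_orbit[OF hom]) (simp add: open_Compl)
    define p where "p = complex_of_real (2 / c)"
    have "1 < c * norm p"
      using \<open>c > 0\<close> by (simp add: p_def norm_divide)
    then have "(f ^^ n) p \<in> - cball 0 1" "(g ^^ n) p \<in> - cball 0 1" for n
      using bound_f[of p n] bound_g[of p n] by auto
    then show "connected V"
      unfolding V_def
      by (intro connected_full_orbit[OF hom]) (auto intro: connected_complement_bounded_convex)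
    show "- cball 0 1 \<subseteq> V"
      unfolding V_def full_orbit_def by (auto intro!: exI[of _ 0])
    have "c < norm z" if "z \<in> V" for z
    proof -
      obtain n u where "1 < norm u" "z = (f ^^ n) u \<or> z = (g ^^ n) u"
        using \<open>z \<in> V\<close> unfolding V_def full_orbit_def by (auto simp: not_le) blast+
      then have "c * norm u \<le> norm z"
        using bound_f bound_g by auto
      moreover have "c < c * norm u"
        using \<open>1 < norm u\<close> \<open>c > 0\<close> by simp
      ultimately show ?thesis by linarith
    qed
    then show "V \<inter> ball 0 c = {}"
      by (force dest: less_asym)
  qed (rule \<open>c > 0\<close>)
  have "f ` V = V"
    unfolding V_def using hom by (intro full_orbit_image) (auto simp: homeomorphism_def)
  then show ?thesis
    using that planar_circloid_fill image_annular_fill[OF hom f0] by blast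
qed

section \<open>The annulus as the punctured plane\<close>

definition polar :: "complex \<times> real \<Rightarrow> complex" where
  "polar a = fst a * of_real (exp (snd a))"

definition polar_inv :: "complex \<Rightarrow> complex \<times> real" where
  "polar_inv z = (z / of_real (norm z), ln (norm z))"

lemma mem_annulus_iff: "a \<in> annulus \<longleftrightarrow> norm (fst a) = 1"
  by (cases a) (auto simp: annulus_def)

lemma norm_polar: "a \<in> annulus \<Longrightarrow> norm (polar a) = exp (snd a)"
  by (simp add: polar_def mem_annulus_iff norm_mult)

lemma polar_nonzero: "a \<in> annulus \<Longrightarrow> polar a \<noteq> 0"
  using norm_polar by fastforce

lemma polar_inv_polar: "a \<in> annulus \<Longrightarrow> polar_inv (polar a) = a"
  by (simp add: polar_inv_def norm_polar prod_eq_iff) (simp add: polar_def)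

lemma polar_inv_in_annulus: "z \<noteq> 0 \<Longrightarrow> polar_inv z \<in> annulus"
  by (simp add: polar_inv_def mem_annulus_iff norm_divide)

lemma polar_polar_inv: "z \<noteq> 0 \<Longrightarrow> polar (polar_inv z) = z"
  by (simp add: polar_inv_def polar_def)

lemma snd_polar_inv: "snd (polar_inv z) = ln (norm z)"
  by (simp add: polar_inv_def)

lemma homeomorphism_polar: "homeomorphism annulus (- {0}) polar polar_inv"
proof (rule homeomorphismI)
  show "continuous_on annulus polar"
    unfolding polar_def by (intro continuous_intros)
  show "continuous_on (- {0}) polar_inv"
    unfolding polar_inv_def by (intro continuous_intros) auto
  show "polar ` annulus \<subseteq> - {0}"
    by (rule image_subsetI) (simp add: polar_nonzero)
  show "polar_inv ` (- {0}) \<subseteq> annulus"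
    by (rule image_subsetI) (simp add: polar_inv_in_annulus)
  show "\<And>a. a \<in> annulus \<Longrightarrow> polar_inv (polar a) = a"
    by (rule polar_inv_polar)
  show "\<And>z. z \<in> - {0} \<Longrightarrow> polar (polar_inv z) = z"
    by (simp add: polar_polar_inv)
qed

lemma inj_on_polar: "inj_on polar annulus"
  using polar_inv_polar by (rule inj_on_inverseI)

lemma polar_image_annulus: "polar ` annulus = - {0}"
  by (rule homeomorphism_image1[OF homeomorphism_polar])

lemma polar_image_polar_inv_image:
  assumes "0 \<notin> P"
  shows "polar ` polar_inv ` P = P"
proof -
  have "polar ` polar_inv ` P = (\<lambda>z. polar (polar_inv z)) ` P"
    by (simp add: image_comp o_def)
  also have "\<dots> = (\<lambda>z. z) ` P"
    by (rule image_cong[OF refl]) (use assms in \<open>metis polar_polar_inv\<close>)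
  finally show ?thesis by simp
qed

lemma polar_inv_image_subset: "0 \<notin> P \<Longrightarrow> polar_inv ` P \<subseteq> annulus"
  by (intro image_subsetI polar_inv_in_annulus) auto

lemma polar_inv_mem_iff:
  assumes "z \<noteq> 0" "U \<subseteq> annulus"
  shows "polar_inv z \<in> U \<longleftrightarrow> z \<in> polar ` U"
  using inj_on_image_mem_iff[OF inj_on_polar polar_inv_in_annulus[OF assms(1)] assms(2)]
  by (simp add: polar_polar_inv assms(1))

lemma homeomorphic_polar_image: "U \<subseteq> annulus \<Longrightarrow> U homeomorphic polar ` U"
  unfolding homeomorphic_def
  using homeomorphism_of_subsets[OF homeomorphism_polar _ order_refl refl] by blast

lemma annulus_homeomorphic: "annulus homeomorphic (- {0::complex})"
  using homeomorphism_polar homeomorphic_def by blast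

lemma openin_annulus_iff:
  assumes "U \<subseteq> annulus"
  shows "openin (top_of_set annulus) U \<longleftrightarrow> open (polar ` U)"
proof
  assume "openin (top_of_set annulus) U"
  then have "openin (top_of_set (- {0})) (polar ` U)"
    by (rule homeomorphism_imp_open_map[OF homeomorphism_polar])
  then show "open (polar ` U)"
    by (rule openin_open_trans) (simp add: open_Compl)
next
  assume "open (polar ` U)"
  then have "openin (top_of_set annulus) (annulus \<inter> polar -` polar ` U)"
    using continuous_openin_preimage_gen[OF homeomorphism_cont1[OF homeomorphism_polar]] by blast
  moreover have "annulus \<inter> polar -` polar ` U = U"
    using inj_on_image_mem_iff[OF inj_on_polar _ assms] assms by blast
  ultimately show "openin (top_of_set annulus) U"
    by simp
qed

lemma not_homotopic_loops_polar_inv_circlepath: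
  assumes "\<rho> > 0" "a \<in> annulus"
  shows "\<not> homotopic_loops annulus (polar_inv \<circ> circlepath 0 \<rho>) (linepath a a)"
proof
  assume "homotopic_loops annulus (polar_inv \<circ> circlepath 0 \<rho>) (linepath a a)"
  then have "homotopic_loops (- {0}) (polar \<circ> (polar_inv \<circ> circlepath 0 \<rho>)) (polar \<circ> linepath a a)"
    by (rule homotopic_loops_continuous_image[OF _ homeomorphism_cont1[OF homeomorphism_polar]])
      (simp add: image_subset_iff_funcset[symmetric] polar_image_annulus)
  moreover have "polar \<circ> (polar_inv \<circ> circlepath 0 \<rho>) = circlepath 0 \<rho>"
    using assms(1) by (simp add: fun_eq_iff polar_polar_inv circlepath norm_mult)
  moreover have "polar \<circ> linepath a a = linepath (polar a) (polar a)"
    by (simp add: linepath_refl o_def)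
  ultimately have "winding_number (circlepath 0 \<rho>) 0 = 0"
    using winding_number_homotopic_loops polar_nonzero[OF assms(2)] by fastforce
  then show False
    using winding_number_circlepath_centre[OF assms(1)] by simp
qed

lemma essential_in_annulus_if_sphere:
  assumes "U \<subseteq> annulus" "\<rho> > 0" "sphere 0 \<rho> \<subseteq> polar ` U"
  shows "essential_in_annulus U"
proof -
  define p where "p = polar_inv \<circ> circlepath 0 \<rho>"
  have "path p"
    unfolding p_def
    by (rule path_continuous_image[OF path_circlepath
          continuous_on_subset[OF homeomorphism_cont2[OF homeomorphism_polar]]])
      (use assms(2) in auto)
  moreover have "pathfinish p = pathstart p"
    by (simp add: p_def pathstart_compose pathfinish_compose)
  moreover have "path_image p \<subseteq> U"
  proof -
    have "path_image p \<subseteq> polar_inv ` polar ` U"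
      unfolding p_def path_image_compose using assms(2,3) by (simp add: image_mono)
    also have "polar_inv ` polar ` U = U"
      using assms(1) by (simp add: image_comp polar_inv_polar subset_eq cong: image_cong)
    finally show ?thesis .
  qed
  moreover have "pathstart p \<in> annulus"
    using \<open>path_image p \<subseteq> U\<close> assms(1) pathstart_in_path_image by blast
  ultimately show ?thesis
    unfolding essential_in_annulus_def
    using not_homotopic_loops_polar_inv_circlepath[OF assms(2)] p_def by blast
qed

lemma nbhd_upper_end_iff:
  assumes "U \<subseteq> annulus"
  shows "nbhd_upper_end U \<longleftrightarrow> (\<exists>R. - cball 0 R \<subseteq> polar ` U)"
proof
  assume "nbhd_upper_end U"
  then obtain M where M: "{a \<in> annulus. snd a > M} \<subseteq> U"
    unfolding nbhd_upper_end_def by blast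
  have "z \<in> polar ` U" if "norm z > exp M" for z
  proof -
    have z: "z \<noteq> 0"
      using that by auto
    then have "M < ln (norm z)"
      using that ln_less_cancel_iff[of "exp M" "norm z"] by simp
    then have "polar_inv z \<in> U"
      using M polar_inv_in_annulus[OF z] by (auto simp: snd_polar_inv)
    then show ?thesis
      using polar_inv_mem_iff[OF z assms] by simp
  qed
  then show "\<exists>R. - cball 0 R \<subseteq> polar ` U"
    by (intro exI[of _ "exp M"]) auto
next
  assume "\<exists>R. - cball 0 R \<subseteq> polar ` U"
  then obtain R where R: "- cball 0 R \<subseteq> polar ` U" by blast
  have "a \<in> U" if "a \<in> annulus" "snd a > R" for a
  proof -
    have "R < exp (snd a)"
      using that(2) exp_gt_self[of "snd a"] by linarith
    then have "polar a \<in> polar ` U"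
      using R norm_polar[OF that(1)] by auto
    then show ?thesis
      using inj_on_image_mem_iff[OF inj_on_polar that(1) assms] by simp
  qed
  then show "nbhd_upper_end U"
    unfolding nbhd_upper_end_def by blast
qed

lemma nbhd_lower_end_iff:
  assumes "U \<subseteq> annulus"
  shows "nbhd_lower_end U \<longleftrightarrow> (\<exists>r>0. ball 0 r - {0} \<subseteq> polar ` U)"
proof
  assume "nbhd_lower_end U"
  then obtain M where M: "{a \<in> annulus. snd a < M} \<subseteq> U"
    unfolding nbhd_lower_end_def by blast
  have small: "z \<in> polar ` U" if "norm z < exp M" "z \<noteq> 0" for z
  proof -
    have "ln (norm z) < M"
      using that ln_less_cancel_iff[of "norm z" "exp M"] by simp
    then have "polar_inv z \<in> U"
      using M polar_inv_in_annulus[OF that(2)] by (auto simp: snd_polar_inv)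
    then show ?thesis
      using polar_inv_mem_iff[OF that(2) assms] by simp
  qed
  show "\<exists>r>0. ball 0 r - {0} \<subseteq> polar ` U"
    by (intro exI[of _ "exp M"] conjI subsetI exp_gt_zero) (simp add: small)
next
  assume "\<exists>r>0. ball 0 r - {0} \<subseteq> polar ` U"
  then obtain r where r: "r > 0" "ball 0 r - {0} \<subseteq> polar ` U" by blast
  have "a \<in> U" if "a \<in> annulus" "snd a < ln r" for a
  proof -
    have "exp (snd a) < r"
      using that(2) r(1) exp_less_cancel_iff[of "snd a" "ln r"] by simp
    then have "polar a \<in> polar ` U"
      using r(2) norm_polar[OF that(1)] polar_nonzero[OF that(1)] by auto
    then show ?thesis
      using inj_on_image_mem_iff[OF inj_on_polar that(1) assms] by simp
  qed
  then show "nbhd_lower_end U"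
    unfolding nbhd_lower_end_def by blast
qed

lemma open_ess_annulus_iff:
  assumes "U \<subseteq> annulus" "\<rho> > 0" "sphere 0 \<rho> \<subseteq> polar ` U"
  shows "open_ess_annulus U \<longleftrightarrow> open (polar ` U) \<and> polar ` U homeomorphic (- {0::complex})"
proof -
  have "U homeomorphic annulus \<longleftrightarrow> polar ` U homeomorphic (- {0::complex})"
    using homeomorphic_polar_image[OF assms(1)] annulus_homeomorphic
    by (meson homeomorphic_sym homeomorphic_trans)
  then show ?thesis
    unfolding open_ess_annulus_def
    using assms essential_in_annulus_if_sphere openin_annulus_iff by blast
qed

lemma polar_image_annular_complement:
  assumes C: "C \<subseteq> annulus"
    and "\<exists>U1 U2. annulus - C = U1 \<union> U2 \<and> U1 \<inter> U2 = {} \<and> open_ess_annulus U1 \<and>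
          open_ess_annulus U2 \<and> nbhd_upper_end U1 \<and> nbhd_lower_end U2"
  shows "\<exists>P1 P2. - {0} - polar ` C = P1 \<union> P2 \<and> P1 \<inter> P2 = {} \<and> open P1 \<and> open P2 \<and>
          P1 homeomorphic (- {0::complex}) \<and> P2 homeomorphic (- {0::complex}) \<and>
          (\<exists>R. - cball 0 R \<subseteq> P1) \<and> (\<exists>r>0. ball 0 r - {0} \<subseteq> P2)"
proof -
  obtain U1 U2 where U: "annulus - C = U1 \<union> U2" "U1 \<inter> U2 = {}" "open_ess_annulus U1"
      "open_ess_annulus U2" "nbhd_upper_end U1" "nbhd_lower_end U2"
    using assms(2) by blast
  have "U1 \<union> U2 \<subseteq> annulus"
    using U(1) Diff_subset by metis
  then have sub: "U1 \<subseteq> annulus" "U2 \<subseteq> annulus"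
    by simp_all
  obtain R where R: "- cball 0 R \<subseteq> polar ` U1"
    using U(5) nbhd_upper_end_iff[OF sub(1)] by blast
  obtain r where r: "r > 0" "ball 0 r - {0} \<subseteq> polar ` U2"
    using U(6) nbhd_lower_end_iff[OF sub(2)] by blast
  have spheres: "sphere 0 (\<bar>R\<bar> + 1) \<subseteq> polar ` U1" "sphere 0 (r/2) \<subseteq> polar ` U2"
    using R r by auto
  have "open (polar ` U1) \<and> polar ` U1 homeomorphic (- {0::complex})"
    "open (polar ` U2) \<and> polar ` U2 homeomorphic (- {0::complex})"
    using U(3,4) open_ess_annulus_iff[OF sub(1) _ spheres(1)] open_ess_annulus_iff[OF sub(2) _ spheres(2)] r(1)
    by (simp_all add: add_pos_nonneg)
  moreover have "polar ` U1 \<inter> polar ` U2 = {}"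
    using inj_on_image_Int[OF inj_on_polar sub] U(2) by simp
  moreover have "- {0} - polar ` C = polar ` U1 \<union> polar ` U2"
    using inj_on_image_set_diff[OF inj_on_polar Diff_subset C] U(1)
    by (simp add: polar_image_annulus image_Un)
  ultimately show ?thesis
    using R r by blast
qed

lemma polar_inv_image_planar_complement:
  assumes C: "C \<subseteq> annulus"
    and "\<exists>P1 P2. - {0} - polar ` C = P1 \<union> P2 \<and> P1 \<inter> P2 = {} \<and> open P1 \<and> open P2 \<and>
          P1 homeomorphic (- {0::complex}) \<and> P2 homeomorphic (- {0::complex}) \<and>
          (\<exists>R. - cball 0 R \<subseteq> P1) \<and> (\<exists>r>0. ball 0 r - {0} \<subseteq> P2)"
  shows "\<exists>U1 U2. annulus - C = U1 \<union> U2 \<and> U1 \<inter> U2 = {} \<and> open_ess_annulus U1 \<and>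
          open_ess_annulus U2 \<and> nbhd_upper_end U1 \<and> nbhd_lower_end U2"
proof -
  obtain P1 P2 R r where P: "- {0} - polar ` C = P1 \<union> P2" "P1 \<inter> P2 = {}" "open P1" "open P2"
      "P1 homeomorphic (- {0::complex})" "P2 homeomorphic (- {0::complex})"
    and R: "- cball 0 R \<subseteq> P1" and r: "r > 0" "ball 0 r - {0} \<subseteq> P2"
    using assms(2) by blast
  define U1 where "U1 = polar_inv ` P1"
  define U2 where "U2 = polar_inv ` P2"
  have "0 \<notin> P1" "0 \<notin> P2"
    using P(1) by blast+
  then have sub: "U1 \<subseteq> annulus" "U2 \<subseteq> annulus" and im: "polar ` U1 = P1" "polar ` U2 = P2"
    unfolding U1_def U2_def by (simp_all add: polar_inv_image_subset polar_image_polar_inv_image)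
  have "polar ` (annulus - C) = polar ` (U1 \<union> U2)"
    using inj_on_image_set_diff[OF inj_on_polar Diff_subset C] P(1) im
    by (simp add: polar_image_annulus image_Un)
  then have U12: "annulus - C = U1 \<union> U2"
    using inj_on_image_eq_iff[OF inj_on_polar Diff_subset Un_least[OF sub]] by simp
  have disj: "U1 \<inter> U2 = {}"
    using inj_on_image_Int[OF inj_on_polar sub] P(2) im by simp
  have spheres: "sphere 0 (\<bar>R\<bar> + 1) \<subseteq> polar ` U1" "sphere 0 (r/2) \<subseteq> polar ` U2"
    using R r im by auto
  have "open_ess_annulus U1" "open_ess_annulus U2"
    using open_ess_annulus_iff[OF sub(1) _ spheres(1)] open_ess_annulus_iff[OF sub(2) _ spheres(2)]
      P(3-6) im r(1)
    by (simp_all add: add_pos_nonneg)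
  moreover have "nbhd_upper_end U1" "nbhd_lower_end U2"
    using nbhd_upper_end_iff[OF sub(1)] nbhd_lower_end_iff[OF sub(2)] R r im by auto
  ultimately show ?thesis
    using U12 disj by blast
qed

lemma annular_continuum_iff_planar:
  assumes C: "C \<subseteq> annulus"
  shows "annular_continuum C \<longleftrightarrow> planar_annular_continuum (polar ` C)"
proof -
  have "(\<exists>U1 U2. annulus - C = U1 \<union> U2 \<and> U1 \<inter> U2 = {} \<and> open_ess_annulus U1 \<and> open_ess_annulus U2 \<and>
          nbhd_upper_end U1 \<and> nbhd_lower_end U2) \<longleftrightarrow>
        (\<exists>P1 P2. - {0} - polar ` C = P1 \<union> P2 \<and> P1 \<inter> P2 = {} \<and> open P1 \<and> open P2 \<and>
          P1 homeomorphic (- {0::complex}) \<and> P2 homeomorphic (- {0::complex}) \<and>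
          (\<exists>R. - cball 0 R \<subseteq> P1) \<and> (\<exists>r>0. ball 0 r - {0} \<subseteq> P2))"
    by (rule iffI[OF polar_image_annular_complement[OF C] polar_inv_image_planar_complement[OF C]])
  moreover have "0 \<notin> polar ` C"
    using C polar_nonzero by (metis image_iff subsetD)
  moreover have "compact C \<longleftrightarrow> compact (polar ` C)" "connected C \<longleftrightarrow> connected (polar ` C)"
    using homeomorphic_polar_image[OF C] homeomorphic_compactness homeomorphic_connectedness by blast+
  ultimately show ?thesis
    unfolding annular_continuum_def planar_annular_continuum_def
    by (simp only: C image_is_empty simp_thms)
qed

lemma circloid_polar_inv_image:
  assumes "planar_circloid Q"
  shows "circloid (polar_inv ` Q)"
proof -
  have Q: "planar_annular_continuum Q"
    and min: "\<And>Q'. planar_annular_continuum Q' \<Longrightarrow> Q' \<subseteq> Q \<Longrightarrow> Q' = Q"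
    using assms unfolding planar_circloid_def by blast+
  then have "0 \<notin> Q"
    unfolding planar_annular_continuum_def by blast
  then have sub: "polar_inv ` Q \<subseteq> annulus" and im: "polar ` polar_inv ` Q = Q"
    by (simp_all add: polar_inv_image_subset polar_image_polar_inv_image)
  have "annular_continuum (polar_inv ` Q)"
    using annular_continuum_iff_planar[OF sub] Q im by simp
  moreover have "C = polar_inv ` Q" if "annular_continuum C" "C \<subseteq> polar_inv ` Q" for C
  proof -
    have "C \<subseteq> annulus"
      using that(2) sub by (rule order_trans)
    then have "planar_annular_continuum (polar ` C)"
      using annular_continuum_iff_planar that(1) by blast
    moreover have "polar ` C \<subseteq> Q"
      using image_mono[OF that(2), of polar] im by simp
    ultimately have "polar ` C = polar ` polar_inv ` Q"
      using min im by simp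
    then show ?thesis
      using inj_on_image_eq_iff[OF inj_on_polar \<open>C \<subseteq> annulus\<close> sub] by blast
  qed
  ultimately show ?thesis
    unfolding circloid_def by blast
qed

section \<open>Transporting an annulus map to the plane\<close>

definition polar_conj :: "(complex \<times> real \<Rightarrow> complex \<times> real) \<Rightarrow> complex \<Rightarrow> complex" where
  "polar_conj f z = (if z = 0 then 0 else polar (f (polar_inv z)))"

lemma funpow_image_subset: "f ` S \<subseteq> S \<Longrightarrow> (f ^^ n) ` S \<subseteq> S"
  by (induction n) (auto simp: image_subset_iff)

lemma polar_conj_polar: "a \<in> annulus \<Longrightarrow> polar_conj f (polar a) = polar (f a)"
  by (simp add: polar_conj_def polar_nonzero polar_inv_polar)

lemma polar_inv_polar_conj:
  assumes "f ` annulus \<subseteq> annulus" "z \<noteq> 0"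
  shows "polar_inv (polar_conj f z) = f (polar_inv z)"
  using assms polar_inv_in_annulus[OF assms(2)] by (auto simp: polar_conj_def polar_inv_polar)

lemma funpow_polar_conj:
  assumes "f ` annulus \<subseteq> annulus"
  shows "polar_conj f ^^ n = polar_conj (f ^^ n)"
proof (induction n)
  case 0
  show ?case
    by (simp add: fun_eq_iff polar_conj_def polar_polar_inv)
next
  case (Suc n)
  have "polar_conj f (polar_conj (f ^^ n) z) = polar_conj (f ^^ Suc n) z" for z
  proof (cases "z = 0")
    case False
    then have "(f ^^ n) (polar_inv z) \<in> annulus"
      using funpow_image_subset[OF assms, of n] polar_inv_in_annulus[OF False]
      by (simp add: image_subset_iff)
    then show ?thesis
      using False by (simp add: polar_conj_def polar_conj_polar[unfolded polar_conj_def])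
  qed (simp add: polar_conj_def)
  then show ?case
    using Suc by (simp add: fun_eq_iff o_def)
qed

lemma norm_polar_conj_bounds:
  assumes "f ` annulus \<subseteq> annulus" "\<forall>a\<in>annulus. \<bar>snd (f a) - snd a\<bar> \<le> B"
  shows "exp (- B) * norm z \<le> norm (polar_conj f z)" "norm (polar_conj f z) \<le> exp B * norm z"
proof (atomize (full), cases "z = 0")
  case False
  define a where "a = polar_inv z"
  have a: "a \<in> annulus" "f a \<in> annulus"
    using False assms(1) polar_inv_in_annulus by (simp_all add: a_def image_subset_iff)
  have "norm z = exp (snd a)"
    using False by (simp add: a_def snd_polar_inv)
  moreover have "norm (polar_conj f z) = exp (snd (f a))"
    using False a by (simp add: polar_conj_def a_def norm_polar)
  moreover have "snd a - B \<le> snd (f a)" "snd (f a) \<le> snd a + B"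
    using bspec[OF assms(2) a(1)] by linarith+
  ultimately show "exp (- B) * norm z \<le> norm (polar_conj f z) \<and> norm (polar_conj f z) \<le> exp B * norm z"
    by (simp add: mult_exp_exp add.commute)
qed (simp add: polar_conj_def)

lemma continuous_on_polar_conj:
  assumes "continuous_on annulus f" "f ` annulus \<subseteq> annulus"
    and "\<forall>a\<in>annulus. \<bar>snd (f a) - snd a\<bar> \<le> B"
  shows "continuous_on UNIV (polar_conj f)"
proof (rule continuous_at_imp_continuous_on, intro ballI)
  fix z :: complex
  have "continuous_on (- {0}) (polar \<circ> f \<circ> polar_inv)"
  proof (intro continuous_on_compose)
    have im: "polar_inv ` (- {0}) = annulus"
      by (rule homeomorphism_image2[OF homeomorphism_polar])
    show "continuous_on (- {0}) polar_inv"
      by (rule homeomorphism_cont2[OF homeomorphism_polar])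
    show "continuous_on (polar_inv ` (- {0})) f"
      unfolding im by (rule assms(1))
    show "continuous_on (f ` polar_inv ` (- {0})) polar"
      unfolding im by (rule continuous_on_subset[OF homeomorphism_cont1[OF homeomorphism_polar] assms(2)])
  qed
  then have "continuous_on (- {0}) (polar_conj f)"
    by (rule continuous_on_cong[THEN iffD1, rotated 2]) (simp_all add: polar_conj_def)
  then have nonzero: "isCont (polar_conj f) z" if "z \<noteq> 0"
    using that by (simp add: continuous_on_eq_continuous_at open_Compl)
  have "((\<lambda>z. exp B * norm z) \<longlongrightarrow> 0) (at (0::complex))"
    by (intro tendsto_mult_right_zero tendsto_norm_zero tendsto_ident_at)
  then have "(polar_conj f \<longlongrightarrow> 0) (at 0)"
    by (rule Lim_null_comparison[rotated])
      (simp add: always_eventually norm_polar_conj_bounds(2)[OF assms(2,3)])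
  then have zero: "isCont (polar_conj f) 0"
    by (simp add: isCont_def polar_conj_def)
  show "isCont (polar_conj f) z"
    using nonzero zero by (cases "z = 0") simp_all
qed

lemma homeomorphism_polar_conj:
  assumes hom: "homeomorphism annulus annulus f g"
    and "\<forall>a\<in>annulus. \<bar>snd (f a) - snd a\<bar> \<le> B" "\<forall>a\<in>annulus. \<bar>snd (g a) - snd a\<bar> \<le> B"
  shows "homeomorphism UNIV UNIV (polar_conj f) (polar_conj g)"
proof -
  have inverse: "polar_conj h' (polar_conj h z) = z"
    if "homeomorphism annulus annulus h h'" for h h' z
  proof (cases "z = 0")
    case False
    then have "polar_inv z \<in> annulus" "h (polar_inv z) \<in> annulus"
      using polar_inv_in_annulus homeomorphism_image1[OF that] by (metis image_eqI)+
    then show ?thesis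
      using False homeomorphism_apply1[OF that]
      by (simp add: polar_conj_def polar_conj_polar[unfolded polar_conj_def] polar_polar_inv)
  qed (simp add: polar_conj_def)
  show ?thesis
  proof (rule homeomorphismI)
    show "continuous_on UNIV (polar_conj f)"
      by (rule continuous_on_polar_conj[OF homeomorphism_cont1[OF hom] _ assms(2)])
        (simp add: homeomorphism_image1[OF hom])
    show "continuous_on UNIV (polar_conj g)"
      by (rule continuous_on_polar_conj[OF homeomorphism_cont2[OF hom] _ assms(3)])
        (simp add: homeomorphism_image2[OF hom])
  qed (use inverse[OF hom] inverse[OF homeomorphism_symD[OF hom]] in auto)
qed

lemma image_polar_inv_polar_conj:
  assumes "f ` annulus \<subseteq> annulus" "0 \<notin> Q"
  shows "f ` polar_inv ` Q = polar_inv ` polar_conj f ` Q"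
proof -
  have "f (polar_inv z) = polar_inv (polar_conj f z)" if "z \<in> Q" for z
    using polar_inv_polar_conj[OF assms(1)] that assms(2) by metis
  then show ?thesis
    unfolding image_comp by (intro image_cong) simp_all
qed

theorem mainTheorem8:
  fixes k :: int and f g :: "complex \<times> real \<Rightarrow> complex \<times> real"
  assumes "k \<ge> 1"
    and "homeo_dehn_nw k f g"
    and "bounded_diffusion f g"
  shows "\<exists>C. circloid C \<and> f ` C = C"
proof -
  have hom: "homeomorphism annulus annulus f g"
    using assms(2) unfolding homeo_dehn_nw_def by blast
  obtain B where B: "\<And>n. \<forall>a\<in>annulus. \<bar>snd ((f ^^ n) a) - snd a\<bar> \<le> B \<and> \<bar>snd ((g ^^ n) a) - snd a\<bar> \<le> B"
    using assms(3) unfolding bounded_diffusion_def by blast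
  have maps: "(f ^^ n) ` annulus \<subseteq> annulus" "(g ^^ n) ` annulus \<subseteq> annulus" for n
    using funpow_image_subset homeomorphism_image1[OF hom] homeomorphism_image2[OF hom]
    by (metis order_refl)+
  have "\<forall>a\<in>annulus. \<bar>snd (f a) - snd a\<bar> \<le> B" "\<forall>a\<in>annulus. \<bar>snd (g a) - snd a\<bar> \<le> B"
    using B[of 1] by simp_all
  then have "homeomorphism UNIV UNIV (polar_conj f) (polar_conj g)"
    by (rule homeomorphism_polar_conj[OF hom])
  moreover have "polar_conj f 0 = 0"
    by (simp add: polar_conj_def)
  moreover have "exp (- B) * norm z \<le> norm ((polar_conj f ^^ n) z)"
    "exp (- B) * norm z \<le> norm ((polar_conj g ^^ n) z)" for n z
    using norm_polar_conj_bounds(1)[OF maps(1)] norm_polar_conj_bounds(1)[OF maps(2)] B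
      funpow_polar_conj[OF maps(1)[of 1]] funpow_polar_conj[OF maps(2)[of 1]] by simp_all
  ultimately obtain Q where Q: "planar_circloid Q" "polar_conj f ` Q = Q"
    using planar_invariant_circloid[of "polar_conj f" "polar_conj g" "exp (- B)"] exp_gt_zero by metis
  have "0 \<notin> Q"
    using Q(1) by (simp add: planar_circloid_def planar_annular_continuum_def)
  then have "f ` polar_inv ` Q = polar_inv ` Q"
    using image_polar_inv_polar_conj[OF maps(1)[of 1]] Q(2) by simp
  then show ?thesis
    using circloid_polar_inv_image[OF Q(1)] by blast
qed

end
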